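(* Let $(X_t)_{t\ge0}$ be a positive recurrent continuous-time Markov chain on a countable state space $E$ with semigroup $P_t$ and stationary distribution $\pi$, and assume $P_t$ is reversible with respect to $\pi$. Let $f:E\to[1,\infty)$ with $\pi(f^2)<\infty$. Then $P_t$ has exponential $f$-ergodicity if and only if the semigroup $P^f_t$ converges exponentially in the $L^2(\nu)$-norm. Moreover $\varepsilon_{\max}=\sigma_{\max}$.
   Context: $\|\mu\|_f:=\sup_{|g|\le f}|\mu(g)|=\sum_if(i)|\mu_i|$ for a signed measure $\mu$. Exponential $f$-ergodicity: there exist $\varepsilon>0$ and finite constants $C(i,f)$ with $\|P_t(i,\cdot)-\pi\|_f\le C(i,f)e^{-\varepsilon t}$ for all $i\in E,t\ge0$; $\varepsilon_{\max}$ is the supremum of such $\varepsilon$. The $h$-transform: $P_t^fg=\frac1fP_t(fg)$, $\pi^f(g)(i)=\frac1{f(i)}\sum_j\pi_jf(j)g(j)$, $\nu_i=f(i)^2\pi_i$. $P^f_t$ converges exponentially in the $L^2(\nu)$-norm if there is $\sigma>0$ with $\|P^f_tg-\pi^f(g)\|_{L^2(\nu)}\le \|g-\pi^f(g)\|_{L^2(\nu)}e^{-\sigma t}$ for all $t\ge0$, $g\in L^2(\nu)$; the largest such $\sigma$ is $\sigma_{\max}$. *)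

theory Defs
  imports "HOL-Analysis.Analysis"
begin

text \<open>Transition functions of a continuous-time Markov chain on a countable state
  space 'a: P t i j is the probability of going from i to j in time t (t \<ge> 0).\<close>

definition markov_semigroup :: "(real \<Rightarrow> 'a \<Rightarrow> 'a \<Rightarrow> real) \<Rightarrow> bool" where
  "markov_semigroup P \<longleftrightarrow>
     (\<forall>t\<ge>0. \<forall>i j. P t i j \<ge> 0) \<and>
     (\<forall>t\<ge>0. \<forall>i. ((\<lambda>j. P t i j) has_sum 1) UNIV) \<and>
     (\<forall>i j. P 0 i j = (if i = j then 1 else 0)) \<and>
     (\<forall>s\<ge>0. \<forall>t\<ge>0. \<forall>i k. ((\<lambda>j. P s i j * P t j k) has_sum P (s + t) i k) UNIV) \<and>
     (\<forall>i. ((\<lambda>t. P t i i) \<longlongrightarrow> 1) (at_right 0))"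

definition irreducible_chain :: "(real \<Rightarrow> 'a \<Rightarrow> 'a \<Rightarrow> real) \<Rightarrow> bool" where
  "irreducible_chain P \<longleftrightarrow> (\<forall>i j. \<exists>t>0. P t i j > 0)"

definition stationary_distribution :: "(real \<Rightarrow> 'a \<Rightarrow> 'a \<Rightarrow> real) \<Rightarrow> ('a \<Rightarrow> real) \<Rightarrow> bool" where
  "stationary_distribution P \<pi> \<longleftrightarrow>
     (\<forall>i. \<pi> i \<ge> 0) \<and> (\<pi> has_sum 1) UNIV \<and>
     (\<forall>t\<ge>0. \<forall>j. ((\<lambda>i. \<pi> i * P t i j) has_sum \<pi> j) UNIV)"

text \<open>Positive recurrence (for an irreducible standard transition function this is
  equivalent to the existence of a stationary distribution).\<close>
definition positive_recurrent :: "(real \<Rightarrow> 'a \<Rightarrow> 'a \<Rightarrow> real) \<Rightarrow> bool" where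
  "positive_recurrent P \<longleftrightarrow> markov_semigroup P \<and> irreducible_chain P \<and>
     (\<exists>\<pi>. stationary_distribution P \<pi>)"

definition reversible :: "(real \<Rightarrow> 'a \<Rightarrow> 'a \<Rightarrow> real) \<Rightarrow> ('a \<Rightarrow> real) \<Rightarrow> bool" where
  "reversible P \<pi> \<longleftrightarrow> (\<forall>t\<ge>0. \<forall>i j. \<pi> i * P t i j = \<pi> j * P t j i)"

definition exp_f_ergodic_rate ::
  "(real \<Rightarrow> 'a \<Rightarrow> 'a \<Rightarrow> real) \<Rightarrow> ('a \<Rightarrow> real) \<Rightarrow> ('a \<Rightarrow> real) \<Rightarrow> real \<Rightarrow> bool" where
  "exp_f_ergodic_rate P \<pi> f \<epsilon> \<longleftrightarrow> \<epsilon> > 0 \<and>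
     (\<exists>C :: 'a \<Rightarrow> real. \<forall>i. \<forall>t\<ge>0.
        (\<lambda>j. f j * \<bar>P t i j - \<pi> j\<bar>) summable_on UNIV \<and>
        (\<Sum>\<^sub>\<infinity>j. f j * \<bar>P t i j - \<pi> j\<bar>) \<le> C i * exp (- \<epsilon> * t))"

definition exp_f_ergodic ::
  "(real \<Rightarrow> 'a \<Rightarrow> 'a \<Rightarrow> real) \<Rightarrow> ('a \<Rightarrow> real) \<Rightarrow> ('a \<Rightarrow> real) \<Rightarrow> bool" where
  "exp_f_ergodic P \<pi> f \<longleftrightarrow> (\<exists>\<epsilon>. exp_f_ergodic_rate P \<pi> f \<epsilon>)"

definition eps_max ::
  "(real \<Rightarrow> 'a \<Rightarrow> 'a \<Rightarrow> real) \<Rightarrow> ('a \<Rightarrow> real) \<Rightarrow> ('a \<Rightarrow> real) \<Rightarrow> ereal" where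
  "eps_max P \<pi> f = Sup (ereal ` {\<epsilon>. exp_f_ergodic_rate P \<pi> f \<epsilon>})"

definition h_transform ::
  "(real \<Rightarrow> 'a \<Rightarrow> 'a \<Rightarrow> real) \<Rightarrow> ('a \<Rightarrow> real) \<Rightarrow> real \<Rightarrow> ('a \<Rightarrow> real) \<Rightarrow> 'a \<Rightarrow> real" where
  "h_transform P f t g i = (\<Sum>\<^sub>\<infinity>j. P t i j * (f j * g j)) / f i"

definition pi_f :: "('a \<Rightarrow> real) \<Rightarrow> ('a \<Rightarrow> real) \<Rightarrow> ('a \<Rightarrow> real) \<Rightarrow> 'a \<Rightarrow> real" where
  "pi_f \<pi> f g i = (\<Sum>\<^sub>\<infinity>j. \<pi> j * f j * g j) / f i"

definition nu :: "('a \<Rightarrow> real) \<Rightarrow> ('a \<Rightarrow> real) \<Rightarrow> 'a \<Rightarrow> real" where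
  "nu \<pi> f i = (f i)^2 * \<pi> i"

definition in_L2 :: "('a \<Rightarrow> real) \<Rightarrow> ('a \<Rightarrow> real) \<Rightarrow> bool" where
  "in_L2 \<mu> g \<longleftrightarrow> (\<lambda>i. \<mu> i * (g i)^2) summable_on UNIV"

definition L2_norm :: "('a \<Rightarrow> real) \<Rightarrow> ('a \<Rightarrow> real) \<Rightarrow> real" where
  "L2_norm \<mu> g = sqrt (\<Sum>\<^sub>\<infinity>i. \<mu> i * (g i)^2)"

definition L2_exp_conv_rate ::
  "(real \<Rightarrow> 'a \<Rightarrow> 'a \<Rightarrow> real) \<Rightarrow> ('a \<Rightarrow> real) \<Rightarrow> ('a \<Rightarrow> real) \<Rightarrow> real \<Rightarrow> bool" where
  "L2_exp_conv_rate P \<pi> f \<sigma> \<longleftrightarrow> \<sigma> > 0 \<and>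
     (\<forall>t\<ge>0. \<forall>g. in_L2 (nu \<pi> f) g \<longrightarrow>
        in_L2 (nu \<pi> f) (\<lambda>i. h_transform P f t g i - pi_f \<pi> f g i) \<and>
        L2_norm (nu \<pi> f) (\<lambda>i. h_transform P f t g i - pi_f \<pi> f g i)
          \<le> L2_norm (nu \<pi> f) (\<lambda>i. g i - pi_f \<pi> f g i) * exp (- \<sigma> * t))"

definition L2_exp_conv ::
  "(real \<Rightarrow> 'a \<Rightarrow> 'a \<Rightarrow> real) \<Rightarrow> ('a \<Rightarrow> real) \<Rightarrow> ('a \<Rightarrow> real) \<Rightarrow> bool" where
  "L2_exp_conv P \<pi> f \<longleftrightarrow> (\<exists>\<sigma>. L2_exp_conv_rate P \<pi> f \<sigma>)"

definition sigma_max ::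
  "(real \<Rightarrow> 'a \<Rightarrow> 'a \<Rightarrow> real) \<Rightarrow> ('a \<Rightarrow> real) \<Rightarrow> ('a \<Rightarrow> real) \<Rightarrow> ereal" where
  "sigma_max P \<pi> f = Sup (ereal ` {\<sigma>. L2_exp_conv_rate P \<pi> f \<sigma>})"

end

theory Submission
  imports Defs
begin

text \<open>Every rate of exponential \<open>f\<close>-ergodicity is an \<open>L\<^sup>2(\<nu>)\<close> rate and conversely, so
  \<open>\<epsilon>_max = \<sigma>_max\<close>. Under \<open>g = w / f\<close> the \<open>h\<close>-transform on \<open>L\<^sup>2(\<nu>)\<close> becomes \<open>P\<^sub>t\<close> on
  \<open>L\<^sup>2(\<pi>)\<close>, and \<open>\<pi>\<^sup>f\<close> becomes the projection onto constants.

  From \<open>L\<^sup>2\<close> to \<open>f\<close>-ergodicity: testing the \<open>L\<^sup>2\<close> bound on a point mass at \<open>i\<close> gives, by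
  reversibility, \<open>\<Sum>_j \<pi>_j (P_t(i,j)/\<pi>_j - 1)^2 \<le> C e^(-2\<sigma>t)\<close>; Cauchy-Schwarz against
  \<open>\<pi>(f^2) < \<infinity>\<close> then bounds \<open>\<parallel>P_t(i,\<cdot>) - \<pi>\<parallel>_f\<close>.

  From \<open>f\<close>-ergodicity to \<open>L\<^sup>2\<close>: for finitely supported \<open>w\<close> of \<open>\<pi>\<close>-mean zero put
  \<open>\<psi>(s) = \<langle>w, P_s w\<rangle>_\<pi>\<close>. Self-adjointness gives \<open>\<parallel>P_t w\<parallel>^2 = \<psi>(2t)\<close> and
  \<open>\<psi>(2t)^2 \<le> \<psi>(0) \<psi>(4t)\<close>, hence \<open>\<psi>(2t)^(2^n) \<le> \<psi>(0)^(2^n - 1) \<psi>(2^(n+1) t)\<close>. The pointwise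
  decay \<open>|P_s(i,j) - \<pi>_j| \<le> C_i e^(-\<epsilon>s)\<close> only gives \<open>\<psi>(s) = O(e^(-\<epsilon>s))\<close>, but after taking
  \<open>2^n\<close>-th roots the constant disappears: \<open>\<psi>(2t) \<le> e^(-2\<epsilon>t) \<psi>(0)\<close>. General \<open>w\<close> follow by
  finite approximation.\<close>

lemma summable_on_by_abs_bound:
  fixes f :: "'a \<Rightarrow> real"
  assumes "g summable_on A" "\<And>x. x \<in> A \<Longrightarrow> \<bar>f x\<bar> \<le> g x"
  shows "f summable_on A"
  by (rule abs_summable_summable[OF Infinite_Sum.abs_summable_on_comparison_test'[OF assms(1)]])
     (use assms(2) in simp)

lemma has_sum_sum:
  fixes F :: "'b \<Rightarrow> 'a \<Rightarrow> real"
  assumes "finite S" "\<And>j. j \<in> S \<Longrightarrow> ((\<lambda>i. F j i) has_sum a j) A"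
  shows "((\<lambda>i. \<Sum>j\<in>S. F j i) has_sum (\<Sum>j\<in>S. a j)) A"
  using assms by (induction S rule: finite_induct) (simp_all add: has_sum_add)

lemma weighted_Cauchy_Schwarz:
  fixes p a b :: "'a \<Rightarrow> real"
  assumes "\<And>i. i \<in> I \<Longrightarrow> p i \<ge> 0"
  shows "(\<Sum>i\<in>I. p i * a i * b i)\<^sup>2 \<le> (\<Sum>i\<in>I. p i * (a i)\<^sup>2) * (\<Sum>i\<in>I. p i * (b i)\<^sup>2)"
proof -
  have "(\<Sum>i\<in>I. (sqrt (p i) * a i) * (sqrt (p i) * b i))\<^sup>2
        \<le> (\<Sum>i\<in>I. (sqrt (p i) * a i)\<^sup>2) * (\<Sum>i\<in>I. (sqrt (p i) * b i)\<^sup>2)"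
    by (rule Cauchy_Schwarz_ineq_sum)
  moreover have "(\<Sum>i\<in>I. (sqrt (p i) * a i) * (sqrt (p i) * b i)) = (\<Sum>i\<in>I. p i * a i * b i)"
    by (rule sum.cong) (use assms in \<open>auto simp: algebra_simps\<close>)
  moreover have "\<And>c. (\<Sum>i\<in>I. (sqrt (p i) * c i)\<^sup>2) = (\<Sum>i\<in>I. p i * (c i)\<^sup>2)"
    by (rule sum.cong) (use assms in \<open>auto simp: power_mult_distrib\<close>)
  ultimately show ?thesis by simp
qed

lemma abs_mult_le_weighted_squares:
  fixes x y p :: real
  assumes "p > 0"
  shows "\<bar>x * y\<bar> \<le> (x\<^sup>2 / p + p * y\<^sup>2) / 2"
proof -
  have "0 \<le> (\<bar>x\<bar> - p * \<bar>y\<bar>)\<^sup>2 / p" using assms by simp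
  also have "\<dots> = x\<^sup>2 / p + p * y\<^sup>2 - 2 * \<bar>x * y\<bar>"
    using assms by (simp add: power2_eq_square field_simps abs_mult)
  finally show ?thesis by simp
qed

lemma infsum_weighted_abs_le_sqrt_mult:
  fixes p a b :: "'a \<Rightarrow> real"
  assumes p: "\<And>i. p i \<ge> 0"
    and a: "(\<lambda>i. p i * (a i)\<^sup>2) summable_on UNIV" and b: "(\<lambda>i. p i * (b i)\<^sup>2) summable_on UNIV"
  shows "(\<lambda>i. p i * \<bar>a i * b i\<bar>) summable_on UNIV"
    and "(\<Sum>\<^sub>\<infinity>i. p i * \<bar>a i * b i\<bar>)
           \<le> sqrt (\<Sum>\<^sub>\<infinity>i. p i * (a i)\<^sup>2) * sqrt (\<Sum>\<^sub>\<infinity>i. p i * (b i)\<^sup>2)"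
proof -
  show sm: "(\<lambda>i. p i * \<bar>a i * b i\<bar>) summable_on UNIV"
  proof (rule summable_on_by_abs_bound)
    show "(\<lambda>i. (p i * (a i)\<^sup>2 + p i * (b i)\<^sup>2) / 2) summable_on UNIV"
      using summable_on_cmult_left[OF summable_on_add[OF a b], of "1/2"] by simp
    fix i
    have "\<bar>p i * \<bar>a i * b i\<bar>\<bar> \<le> p i * (((a i)\<^sup>2 / 1 + 1 * (b i)\<^sup>2) / 2)"
      using mult_left_mono[OF abs_mult_le_weighted_squares[of 1 "a i" "b i"] p[of i]] p[of i]
      by (simp add: abs_mult)
    then show "\<bar>p i * \<bar>a i * b i\<bar>\<bar> \<le> (p i * (a i)\<^sup>2 + p i * (b i)\<^sup>2) / 2"
      by (simp add: algebra_simps)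
  qed
  have sq_nonneg: "p i * (c i)\<^sup>2 \<ge> 0" for c i by (simp add: p)
  show "(\<Sum>\<^sub>\<infinity>i. p i * \<bar>a i * b i\<bar>) \<le> sqrt (\<Sum>\<^sub>\<infinity>i. p i * (a i)\<^sup>2) * sqrt (\<Sum>\<^sub>\<infinity>i. p i * (b i)\<^sup>2)"
  proof (rule infsum_le_finite_sums[OF sm])
    fix F :: "'a set" assume F: "finite F"
    have "(\<Sum>i\<in>F. p i * \<bar>a i\<bar> * \<bar>b i\<bar>)\<^sup>2 \<le> (\<Sum>i\<in>F. p i * \<bar>a i\<bar>\<^sup>2) * (\<Sum>i\<in>F. p i * \<bar>b i\<bar>\<^sup>2)"
      by (rule weighted_Cauchy_Schwarz) (rule p)
    then have "(\<Sum>i\<in>F. p i * \<bar>a i * b i\<bar>)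
               \<le> sqrt ((\<Sum>i\<in>F. p i * (a i)\<^sup>2) * (\<Sum>i\<in>F. p i * (b i)\<^sup>2))"
      by (simp add: real_le_rsqrt abs_mult mult.assoc)
    also have "\<dots> \<le> sqrt ((\<Sum>\<^sub>\<infinity>i. p i * (a i)\<^sup>2) * (\<Sum>\<^sub>\<infinity>i. p i * (b i)\<^sup>2))"
      by (intro real_sqrt_le_mono mult_mono finite_sum_le_infsum a b F sum_nonneg infsum_nonneg
          sq_nonneg) auto
    finally show "(\<Sum>i\<in>F. p i * \<bar>a i * b i\<bar>)
                  \<le> sqrt (\<Sum>\<^sub>\<infinity>i. p i * (a i)\<^sup>2) * sqrt (\<Sum>\<^sub>\<infinity>i. p i * (b i)\<^sup>2)"
      by (simp add: real_sqrt_mult)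
  qed
qed

lemma nu_mult_sq_div:
  assumes "f i \<noteq> 0"
  shows "nu \<pi> f i * (w / f i)\<^sup>2 = \<pi> i * w\<^sup>2"
  using assms unfolding nu_def by (simp add: power_divide field_simps)

text \<open>The \<open>2\<^sup>n\<close>-th root step of the doubling argument: the constant \<open>K\<close> disappears in the limit.\<close>
lemma le_of_power_two_bounds:
  fixes X A K b :: real
  assumes "X \<ge> 0" "A \<ge> 0" "b > 0" "\<And>n::nat. X^(2^n) \<le> A^(2^n - 1) * K * b^(2^n)"
  shows "X \<le> b * A"
proof (cases "A = 0")
  case True
  have "X^2 \<le> 0" using assms(4)[of 1] True by simp
  then show ?thesis using True by simp
next
  case False
  then have A: "A > 0" using assms(2) by simp
  show ?thesis
  proof (rule ccontr)
    assume "\<not> X \<le> b * A"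
    define q where "q = X / (b * A)"
    have q1: "q > 1" using \<open>\<not> X \<le> b * A\<close> A assms(3) by (simp add: q_def)
    have bound: "q^(2^n) * A \<le> K" for n :: nat
    proof -
      define N :: nat where "N = 2^n"
      have "A * A^(N-1) = A^N" by (cases N) (auto simp: N_def)
      then have "(q^N * A) * (b^N * A^(N-1)) = X^N"
        using A assms(3) by (simp add: q_def power_mult_distrib power_divide field_simps)
      also have "\<dots> \<le> K * (b^N * A^(N-1))" using assms(4)[of n] by (simp add: N_def mult_ac)
      finally show ?thesis unfolding N_def using A assms(3)
        by (metis mult_right_le_imp_le zero_less_mult_iff zero_less_power)
    qed
    obtain n where n: "K / A < q^n" using real_arch_pow[OF q1] by blast
    have "q^n \<le> q^(2^n)" using q1 by (intro power_increasing) (auto intro: less_imp_le[OF less_exp])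
    have "K < q^n * A" using n A by (simp add: field_simps)
    also have "\<dots> \<le> q^(2^n) * A" using \<open>q^n \<le> q^(2^n)\<close> A by simp
    finally have "K < q^(2^n) * A" .
    then show False using bound[of n] by simp
  qed
qed

locale reversible_chain =
  fixes P :: "real \<Rightarrow> 'a \<Rightarrow> 'a \<Rightarrow> real" and \<pi> :: "'a \<Rightarrow> real"
  assumes P_nonneg: "\<And>t i j. t \<ge> 0 \<Longrightarrow> P t i j \<ge> 0"
    and P_has_sum: "\<And>t i. t \<ge> 0 \<Longrightarrow> ((\<lambda>j. P t i j) has_sum 1) UNIV"
    and P_zero: "\<And>i j. P 0 i j = (if i = j then 1 else 0)"
    and Chapman_Kolmogorov:
      "\<And>s t i k. s \<ge> 0 \<Longrightarrow> t \<ge> 0 \<Longrightarrow> ((\<lambda>j. P s i j * P t j k) has_sum P (s + t) i k) UNIV"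
    and pi_pos: "\<And>i. \<pi> i > 0"
    and pi_has_sum: "(\<pi> has_sum 1) UNIV"
    and detailed_balance: "\<And>t i j. t \<ge> 0 \<Longrightarrow> \<pi> i * P t i j = \<pi> j * P t j i"
begin

lemma pi_nonneg: "\<pi> i \<ge> 0"
  using pi_pos[of i] by simp

lemma weighted_sq_nonneg: "\<pi> i * (w i)\<^sup>2 \<ge> 0"
  by (simp add: pi_nonneg)

definition P_apply :: "real \<Rightarrow> ('a \<Rightarrow> real) \<Rightarrow> 'a \<Rightarrow> real" where
  "P_apply t w i = (\<Sum>\<^sub>\<infinity>j. P t i j * w j)"

lemma P_div_pi_sym: "t \<ge> 0 \<Longrightarrow> P t i j / \<pi> j = P t j i / \<pi> i"
  using detailed_balance[of t i j] pi_pos[of i] pi_pos[of j] by (simp add: field_simps)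

text \<open>By reversibility \<open>\<Sum>\<^sub>j P\<^sub>t(i,j)\<^sup>2/\<pi>\<^sub>j = P\<^sub>2\<^sub>t(i,i)/\<pi>\<^sub>i < \<infinity>\<close>, so \<open>P\<^sub>t w\<close> is defined for all \<open>w \<in> L\<^sup>2(\<pi>)\<close>.\<close>
lemma summable_P_mult:
  assumes "t \<ge> 0" "(\<lambda>j. \<pi> j * (w j)\<^sup>2) summable_on UNIV"
  shows "(\<lambda>j. P t i j * w j) summable_on UNIV"
proof (rule summable_on_by_abs_bound)
  have "(\<lambda>j. P t i j * P t j i / \<pi> i) summable_on UNIV"
    using has_sum_cmult_left[OF Chapman_Kolmogorov[OF assms(1) assms(1), of i i], of "1 / \<pi> i"]
    by (auto simp: summable_on_def)
  then show "(\<lambda>j. (P t i j * P t j i / \<pi> i + \<pi> j * (w j)\<^sup>2) / 2) summable_on UNIV"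
    using summable_on_cmult_left[OF summable_on_add[OF _ assms(2)], of _ "1/2"] by simp
next
  fix j
  have "(P t i j)\<^sup>2 / \<pi> j = P t i j * (P t i j / \<pi> j)" by (simp add: power2_eq_square)
  also have "\<dots> = P t i j * P t j i / \<pi> i" using P_div_pi_sym[OF assms(1), of i j] by simp
  finally show "\<bar>P t i j * w j\<bar> \<le> (P t i j * P t j i / \<pi> i + \<pi> j * (w j)\<^sup>2) / 2"
    using abs_mult_le_weighted_squares[OF pi_pos[of j], of "P t i j" "w j"] by simp
qed

lemma P_apply_minus_const:
  assumes "t \<ge> 0" "(\<lambda>j. \<pi> j * (u j)\<^sup>2) summable_on UNIV"
  shows "P_apply t (\<lambda>j. u j - m) i = P_apply t u i - m"
proof -
  have "((\<lambda>j. P t i j * u j + (- m) * P t i j) has_sum (P_apply t u i + (- m) * 1)) UNIV"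
    by (intro has_sum_add has_sum_cmult_right P_has_sum assms(1))
       (use summable_P_mult[OF assms, of i] in \<open>simp add: P_apply_def\<close>)
  then show ?thesis
    unfolding P_apply_def by (intro infsumI) (simp add: algebra_simps)
qed

definition quad_form :: "'a set \<Rightarrow> ('a \<Rightarrow> real) \<Rightarrow> real \<Rightarrow> real" where
  "quad_form S w s = (\<Sum>j\<in>S. \<Sum>k\<in>S. w j * w k * \<pi> j * P s j k)"

lemma has_sum_sq_P_truncation:
  assumes "finite S" "t \<ge> 0"
  shows "((\<lambda>i. \<pi> i * (\<Sum>j\<in>S. P t i j * w j)\<^sup>2) has_sum quad_form S w (2 * t)) UNIV"
proof -
  have expand: "\<pi> i * (\<Sum>j\<in>S. P t i j * w j)\<^sup>2
                = (\<Sum>j\<in>S. \<Sum>k\<in>S. w j * w k * \<pi> j * (P t j i * P t i k))" for i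
  proof -
    have "\<pi> i * (\<Sum>j\<in>S. P t i j * w j)\<^sup>2 = (\<Sum>j\<in>S. \<Sum>k\<in>S. w j * w k * (\<pi> i * P t i j) * P t i k)"
      by (simp add: power2_eq_square sum_product sum_distrib_left mult_ac)
    also have "\<dots> = (\<Sum>j\<in>S. \<Sum>k\<in>S. w j * w k * \<pi> j * (P t j i * P t i k))"
      by (simp add: detailed_balance[OF assms(2)] mult_ac)
    finally show ?thesis .
  qed
  have "((\<lambda>i. \<Sum>j\<in>S. \<Sum>k\<in>S. w j * w k * \<pi> j * (P t j i * P t i k)) has_sum
          (\<Sum>j\<in>S. \<Sum>k\<in>S. w j * w k * \<pi> j * P (t + t) j k)) UNIV"
    by (intro has_sum_sum assms(1) has_sum_cmult_right Chapman_Kolmogorov assms(2))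
  then show ?thesis unfolding quad_form_def expand mult_2 .
qed

lemma quad_form_zero:
  assumes "finite S"
  shows "quad_form S w 0 = (\<Sum>j\<in>S. \<pi> j * (w j)\<^sup>2)"
  unfolding quad_form_def
proof (intro sum.cong refl)
  fix j assume j: "j \<in> S"
  have "(\<Sum>k\<in>S. w j * w k * \<pi> j * P 0 j k) = (\<Sum>k\<in>S. if j = k then w j * w k * \<pi> j else 0)"
    by (intro sum.cong refl) (simp add: P_zero)
  also have "\<dots> = \<pi> j * (w j)\<^sup>2" using assms j by (simp add: power2_eq_square mult_ac)
  finally show "(\<Sum>k\<in>S. w j * w k * \<pi> j * P 0 j k) = \<pi> j * (w j)\<^sup>2" .
qed

lemma quad_form_nonneg:
  assumes "finite S" "s \<ge> 0"
  shows "quad_form S w s \<ge> 0"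
proof -
  have "((\<lambda>i. \<pi> i * (\<Sum>j\<in>S. P (s/2) i j * w j)\<^sup>2) has_sum quad_form S w s) UNIV"
    using has_sum_sq_P_truncation[OF assms(1), of "s/2" w] assms(2) by simp
  then show ?thesis by (rule has_sum_nonneg) (rule weighted_sq_nonneg)
qed

lemma quad_form_Cauchy_Schwarz:
  assumes "finite S" "t \<ge> 0"
  shows "(quad_form S w (2 * t))\<^sup>2 \<le> quad_form S w 0 * quad_form S w (2 * (2 * t))"
proof -
  define x where "x j = (\<Sum>k\<in>S. P (2 * t) j k * w k)" for j
  have "quad_form S w (2 * t) = (\<Sum>j\<in>S. \<pi> j * w j * x j)"
    unfolding quad_form_def x_def by (simp add: sum_distrib_left mult_ac)
  then have "(quad_form S w (2 * t))\<^sup>2 \<le> (\<Sum>j\<in>S. \<pi> j * (w j)\<^sup>2) * (\<Sum>j\<in>S. \<pi> j * (x j)\<^sup>2)"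
    using weighted_Cauchy_Schwarz[of S \<pi> w x] pi_nonneg by simp
  also have "\<dots> \<le> (\<Sum>j\<in>S. \<pi> j * (w j)\<^sup>2) * quad_form S w (2 * (2 * t))"
    unfolding x_def
    by (intro mult_left_mono finite_sum_le_has_sum[OF has_sum_sq_P_truncation] sum_nonneg
        weighted_sq_nonneg) (use assms in auto)
  finally show ?thesis using quad_form_zero[OF assms(1)] by simp
qed

lemma quad_form_decay:
  assumes "finite S" "(\<Sum>j\<in>S. \<pi> j * w j) = 0"
    and decay: "\<And>i j s. s \<ge> 0 \<Longrightarrow> \<bar>P s i j - \<pi> j\<bar> \<le> C i * exp (- \<epsilon> * s)"
    and "s \<ge> 0"
  shows "quad_form S w s \<le> (\<Sum>j\<in>S. \<Sum>k\<in>S. \<bar>w j\<bar> * \<bar>w k\<bar> * \<pi> j * C j) * exp (- \<epsilon> * s)"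
proof -
  have "(\<Sum>j\<in>S. \<Sum>k\<in>S. w j * w k * \<pi> j * \<pi> k) = (\<Sum>j\<in>S. \<pi> j * w j) * (\<Sum>k\<in>S. \<pi> k * w k)"
    by (simp add: sum_product mult_ac)
  then have "quad_form S w s = (\<Sum>j\<in>S. \<Sum>k\<in>S. w j * w k * \<pi> j * (P s j k - \<pi> k))"
    using assms(2) unfolding quad_form_def by (simp add: sum_subtractf algebra_simps)
  also have "\<dots> \<le> (\<Sum>j\<in>S. \<Sum>k\<in>S. \<bar>w j\<bar> * \<bar>w k\<bar> * \<pi> j * C j * exp (- \<epsilon> * s))"
  proof (intro sum_mono)
    fix j k
    have "w j * w k * \<pi> j * (P s j k - \<pi> k) \<le> \<bar>w j * w k * \<pi> j * (P s j k - \<pi> k)\<bar>"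
      by (rule abs_ge_self)
    also have "\<dots> = (\<bar>w j\<bar> * \<bar>w k\<bar> * \<pi> j) * \<bar>P s j k - \<pi> k\<bar>"
      using pi_nonneg[of j] by (simp add: abs_mult)
    also have "\<dots> \<le> (\<bar>w j\<bar> * \<bar>w k\<bar> * \<pi> j) * (C j * exp (- \<epsilon> * s))"
      by (intro mult_left_mono decay assms(4)) (simp add: pi_nonneg)
    finally show "w j * w k * \<pi> j * (P s j k - \<pi> k) \<le> \<bar>w j\<bar> * \<bar>w k\<bar> * \<pi> j * C j * exp (- \<epsilon> * s)"
      by (simp add: mult_ac)
  qed
  also have "\<dots> = (\<Sum>j\<in>S. \<Sum>k\<in>S. \<bar>w j\<bar> * \<bar>w k\<bar> * \<pi> j * C j) * exp (- \<epsilon> * s)"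
    by (simp add: sum_distrib_right)
  finally show ?thesis .
qed

lemma quad_form_power_two_iterate:
  assumes "finite S" "t \<ge> 0"
  shows "quad_form S w (2 * t) ^ (2^n)
         \<le> quad_form S w 0 ^ (2^n - 1) * quad_form S w (2 * (2^n * t))"
proof (induction n)
  case 0
  then show ?case by simp
next
  case (Suc n)
  let ?F = "\<lambda>u. quad_form S w (2 * u)" and ?Q0 = "quad_form S w 0"
  have F_nonneg: "?F u \<ge> 0" if "u \<ge> 0" for u
    using quad_form_nonneg[OF assms(1)] that by simp
  have "?F t ^ (2^Suc n) = (?F t ^ (2^n))\<^sup>2"
    by (simp add: power_mult[symmetric] mult.commute)
  also have "\<dots> \<le> (?Q0 ^ (2^n - 1) * ?F (2^n * t))\<^sup>2"
    by (rule power_mono[OF Suc.IH]) (simp add: F_nonneg assms(2))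
  also have "\<dots> = (?Q0 ^ (2^n - 1))\<^sup>2 * (?F (2^n * t))\<^sup>2"
    by (simp add: power_mult_distrib)
  also have "\<dots> \<le> (?Q0 ^ (2^n - 1))\<^sup>2 * (?Q0 * ?F (2^Suc n * t))"
    using quad_form_Cauchy_Schwarz[OF assms(1), of "2^n * t" w] assms(2)
    by (intro mult_left_mono) (simp_all add: mult_ac)
  also have "\<dots> = ?Q0 ^ (2 * (2^n - 1) + 1) * ?F (2^Suc n * t)"
    by (simp add: power_mult[symmetric] mult_ac)
  also have "2 * (2^n - 1) + 1 = (2::nat)^Suc n - 1"
    using one_le_power[of "2::nat" n] by (simp; linarith)
  finally show ?case .
qed

lemma quad_form_contraction:
  assumes "finite S" "(\<Sum>j\<in>S. \<pi> j * w j) = 0"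
    and decay: "\<And>i j s. s \<ge> 0 \<Longrightarrow> \<bar>P s i j - \<pi> j\<bar> \<le> C i * exp (- \<epsilon> * s)"
    and "t \<ge> 0"
  shows "quad_form S w (2 * t) \<le> exp (- 2 * \<epsilon> * t) * (\<Sum>j\<in>S. \<pi> j * (w j)\<^sup>2)"
proof -
  define K where "K = (\<Sum>j\<in>S. \<Sum>k\<in>S. \<bar>w j\<bar> * \<bar>w k\<bar> * \<pi> j * C j)"
  have "quad_form S w (2 * t) \<le> exp (- 2 * \<epsilon> * t) * quad_form S w 0"
  proof (rule le_of_power_two_bounds)
    show "0 \<le> quad_form S w (2 * t)" "0 \<le> quad_form S w 0"
      using quad_form_nonneg[OF assms(1)] assms(4) by simp_all
    fix n :: nat
    have "quad_form S w (2 * (2^n * t)) \<le> K * exp (- \<epsilon> * (2 * (2^n * t)))"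
      unfolding K_def by (rule quad_form_decay[OF assms(1,2) decay]) (use assms(4) in auto)
    also have "exp (- \<epsilon> * (2 * (2^n * t))) = exp (- 2 * \<epsilon> * t) ^ (2^n)"
      by (simp add: exp_of_nat_mult[symmetric] mult_ac)
    finally have "quad_form S w 0 ^ (2^n - 1) * quad_form S w (2 * (2^n * t))
                  \<le> quad_form S w 0 ^ (2^n - 1) * (K * exp (- 2 * \<epsilon> * t) ^ (2^n))"
      using quad_form_nonneg[OF assms(1)] by (intro mult_left_mono) simp_all
    with quad_form_power_two_iterate[OF assms(1,4), of w n]
    show "quad_form S w (2 * t) ^ (2^n) \<le> quad_form S w 0 ^ (2^n - 1) * K * exp (- 2 * \<epsilon> * t) ^ (2^n)"
      by (simp add: mult_ac)
  qed simp
  then show ?thesis using quad_form_zero[OF assms(1)] by simp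
qed

text \<open>A finite truncation of \<open>w\<close> need not have mean zero; correcting it at a single state
  \<open>i\<^sub>0\<close> restores the mean-zero hypothesis of \<open>quad_form_contraction\<close>, and the correction
  vanishes in the limit.\<close>
lemma corrected_truncation_bound:
  assumes "finite F" "finite G" "i0 \<in> G" "(\<Sum>j\<in>G. \<pi> j * w j) = \<pi> i0 * c"
    and decay: "\<And>i j s. s \<ge> 0 \<Longrightarrow> \<bar>P s i j - \<pi> j\<bar> \<le> C i * exp (- \<epsilon> * s)"
    and "t \<ge> 0"
  shows "(\<Sum>i\<in>F. \<pi> i * ((\<Sum>j\<in>G. P t i j * w j) - P t i i0 * c)\<^sup>2)
         \<le> exp (- 2 * \<epsilon> * t) * ((\<Sum>j\<in>G. \<pi> j * (w j)\<^sup>2) - \<pi> i0 * (2 * w i0 * c - c\<^sup>2))"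
proof -
  define v where "v = w(i0 := w i0 - c)"
  have split: "(\<Sum>j\<in>G. h j) = h i0 + (\<Sum>j\<in>G - {i0}. h j)" for h :: "'a \<Rightarrow> real"
    using assms(2,3) by (rule sum.remove)
  have v_off: "(\<Sum>j\<in>G - {i0}. h j (v j)) = (\<Sum>j\<in>G - {i0}. h j (w j))" for h :: "'a \<Rightarrow> real \<Rightarrow> real"
    by (intro sum.cong) (auto simp: v_def)
  have sum_v: "(\<Sum>j\<in>G. a j * v j) = (\<Sum>j\<in>G. a j * w j) - a i0 * c" for a
    using split[of "\<lambda>j. a j * v j"] split[of "\<lambda>j. a j * w j"] v_off[of "\<lambda>j x. a j * x"]
    by (simp add: v_def algebra_simps)
  have sum_v_sq: "(\<Sum>j\<in>G. \<pi> j * (v j)\<^sup>2) = (\<Sum>j\<in>G. \<pi> j * (w j)\<^sup>2) - \<pi> i0 * (2 * w i0 * c - c\<^sup>2)"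
    using split[of "\<lambda>j. \<pi> j * (v j)\<^sup>2"] split[of "\<lambda>j. \<pi> j * (w j)\<^sup>2"]
      v_off[of "\<lambda>j x. \<pi> j * x\<^sup>2"]
    by (simp add: v_def power2_eq_square algebra_simps)
  have "(\<Sum>i\<in>F. \<pi> i * ((\<Sum>j\<in>G. P t i j * w j) - P t i i0 * c)\<^sup>2)
        = (\<Sum>i\<in>F. \<pi> i * (\<Sum>j\<in>G. P t i j * v j)\<^sup>2)"
    by (simp add: sum_v)
  also have "\<dots> \<le> quad_form G v (2 * t)"
    by (intro finite_sum_le_has_sum[OF has_sum_sq_P_truncation] assms weighted_sq_nonneg) simp_all
  also have "\<dots> \<le> exp (- 2 * \<epsilon> * t) * (\<Sum>j\<in>G. \<pi> j * (v j)\<^sup>2)"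
    using assms(4) by (intro quad_form_contraction[OF _ _ decay] assms) (simp add: sum_v)
  finally show ?thesis unfolding sum_v_sq .
qed

lemma P_apply_L2_contraction:
  assumes w2: "(\<lambda>j. \<pi> j * (w j)\<^sup>2) summable_on UNIV"
    and mean: "((\<lambda>j. \<pi> j * w j) has_sum 0) UNIV"
    and decay: "\<And>i j s. s \<ge> 0 \<Longrightarrow> \<bar>P s i j - \<pi> j\<bar> \<le> C i * exp (- \<epsilon> * s)"
    and t: "t \<ge> 0"
  shows "(\<lambda>i. \<pi> i * (P_apply t w i)\<^sup>2) summable_on UNIV"
    and "(\<Sum>\<^sub>\<infinity>i. \<pi> i * (P_apply t w i)\<^sup>2) \<le> exp (- 2 * \<epsilon> * t) * (\<Sum>\<^sub>\<infinity>j. \<pi> j * (w j)\<^sup>2)"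
proof -
  define E where "E = exp (- 2 * \<epsilon> * t)"
  define W where "W = (\<Sum>\<^sub>\<infinity>j. \<pi> j * (w j)\<^sup>2)"
  fix i0 :: 'a \<comment> \<open>any state serves as the correction point\<close>
  define c where "c G = (\<Sum>j\<in>G. \<pi> j * w j) / \<pi> i0" for G
  let ?lim = "finite_subsets_at_top (UNIV :: 'a set)"
  have c_lim: "(c \<longlongrightarrow> 0) ?lim"
    unfolding c_def
    using tendsto_divide[OF mean[unfolded has_sum_def] tendsto_const, of "\<pi> i0"] pi_pos
    by (simp add: less_imp_neq[OF pi_pos, symmetric])
  have partial_bound: "(\<Sum>i\<in>F. \<pi> i * (P_apply t w i)\<^sup>2) \<le> E * W" if F: "finite F" for F
  proof (rule tendsto_le[of ?lim])
    have "((\<lambda>G. \<Sum>i\<in>F. \<pi> i * ((\<Sum>j\<in>G. P t i j * w j) - P t i i0 * c G)\<^sup>2)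
           \<longlongrightarrow> (\<Sum>i\<in>F. \<pi> i * (P_apply t w i - P t i i0 * 0)\<^sup>2)) ?lim"
      unfolding P_apply_def
      by (intro tendsto_intros c_lim infsum_tendsto
          summable_P_mult t w2)
    then show "((\<lambda>G. \<Sum>i\<in>F. \<pi> i * ((\<Sum>j\<in>G. P t i j * w j) - P t i i0 * c G)\<^sup>2)
                \<longlongrightarrow> (\<Sum>i\<in>F. \<pi> i * (P_apply t w i)\<^sup>2)) ?lim"
      by simp
    have "((\<lambda>G. E * ((\<Sum>j\<in>G. \<pi> j * (w j)\<^sup>2) - \<pi> i0 * (2 * w i0 * c G - (c G)\<^sup>2)))
           \<longlongrightarrow> E * (W - \<pi> i0 * (2 * w i0 * 0 - 0\<^sup>2))) ?lim"
      unfolding W_def by (intro tendsto_intros c_lim infsum_tendsto w2)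
    then show "((\<lambda>G. E * ((\<Sum>j\<in>G. \<pi> j * (w j)\<^sup>2) - \<pi> i0 * (2 * w i0 * c G - (c G)\<^sup>2)))
                \<longlongrightarrow> E * W) ?lim"
      by simp
    show "\<forall>\<^sub>F G in ?lim. (\<Sum>i\<in>F. \<pi> i * ((\<Sum>j\<in>G. P t i j * w j) - P t i i0 * c G)\<^sup>2)
           \<le> E * ((\<Sum>j\<in>G. \<pi> j * (w j)\<^sup>2) - \<pi> i0 * (2 * w i0 * c G - (c G)\<^sup>2))"
      unfolding eventually_finite_subsets_at_top E_def
      by (intro exI[of _ "{i0}"] conjI allI impI corrected_truncation_bound[OF _ _ _ _ decay] F t)
         (auto simp: c_def less_imp_neq[OF pi_pos, symmetric])
  qed simp
  show sm: "(\<lambda>i. \<pi> i * (P_apply t w i)\<^sup>2) summable_on UNIV"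
    using partial_bound
    by (intro nonneg_bdd_above_summable_on bdd_aboveI2 weighted_sq_nonneg) auto
  show "(\<Sum>\<^sub>\<infinity>i. \<pi> i * (P_apply t w i)\<^sup>2) \<le> exp (- 2 * \<epsilon> * t) * (\<Sum>\<^sub>\<infinity>j. \<pi> j * (w j)\<^sup>2)"
    using infsum_le_finite_sums[OF sm] partial_bound unfolding E_def W_def by blast
qed

lemma centered_L2:
  assumes u2: "(\<lambda>j. \<pi> j * (u j)\<^sup>2) summable_on UNIV"
  defines "m \<equiv> \<Sum>\<^sub>\<infinity>j. \<pi> j * u j"
  shows "(\<lambda>j. \<pi> j * (u j - m)\<^sup>2) summable_on UNIV"
    and "((\<lambda>j. \<pi> j * (u j - m)) has_sum 0) UNIV"
proof -
  have pi_summable: "\<pi> summable_on UNIV"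
    using pi_has_sum by (auto simp: summable_on_def)
  have u1: "(\<lambda>j. \<pi> j * u j) summable_on UNIV"
  proof (rule summable_on_by_abs_bound)
    show "(\<lambda>j. (\<pi> j + \<pi> j * (u j)\<^sup>2) / 2) summable_on UNIV"
      using summable_on_cmult_left[OF summable_on_add[OF pi_summable u2], of "1/2"] by simp
    fix j
    have "\<pi> j * \<bar>1 * u j\<bar> \<le> \<pi> j * ((1\<^sup>2 / 1 + 1 * (u j)\<^sup>2) / 2)"
      by (intro mult_left_mono abs_mult_le_weighted_squares pi_nonneg) simp
    then show "\<bar>\<pi> j * u j\<bar> \<le> (\<pi> j + \<pi> j * (u j)\<^sup>2) / 2"
      by (simp add: abs_mult pi_nonneg algebra_simps)
  qed
  show "(\<lambda>j. \<pi> j * (u j - m)\<^sup>2) summable_on UNIV"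
  proof (rule summable_on_by_abs_bound)
    show "(\<lambda>j. 2 * (\<pi> j * (u j)\<^sup>2) + (2 * m\<^sup>2) * \<pi> j) summable_on UNIV"
      by (intro summable_on_add summable_on_cmult_right u2 pi_summable)
    fix j
    have "(u j - m)\<^sup>2 \<le> 2 * (u j)\<^sup>2 + 2 * m\<^sup>2"
      using zero_le_power2[of "u j + m"] by (simp add: power2_eq_square algebra_simps)
    then have "\<pi> j * (u j - m)\<^sup>2 \<le> \<pi> j * (2 * (u j)\<^sup>2 + 2 * m\<^sup>2)"
      by (rule mult_left_mono[OF _ pi_nonneg])
    then show "\<bar>\<pi> j * (u j - m)\<^sup>2\<bar> \<le> 2 * (\<pi> j * (u j)\<^sup>2) + (2 * m\<^sup>2) * \<pi> j"
      by (simp add: pi_nonneg algebra_simps)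
  qed
  have "((\<lambda>j. \<pi> j * u j + (- m) * \<pi> j) has_sum (m + (- m) * 1)) UNIV"
    by (intro has_sum_add has_sum_cmult_right pi_has_sum) (use u1 in \<open>simp add: m_def\<close>)
  then show "((\<lambda>j. \<pi> j * (u j - m)) has_sum 0) UNIV"
    by (simp add: algebra_simps)
qed

lemma h_transform_minus_pi_f:
  assumes "t \<ge> 0" "(\<lambda>j. \<pi> j * (f j * g j)\<^sup>2) summable_on UNIV"
  defines "m \<equiv> \<Sum>\<^sub>\<infinity>j. \<pi> j * (f j * g j)"
  shows "h_transform P f t g i - pi_f \<pi> f g i = P_apply t (\<lambda>j. f j * g j - m) i / f i"
    and "f i \<noteq> 0 \<Longrightarrow> g i - pi_f \<pi> f g i = (f i * g i - m) / f i"
proof -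
  have pi_f_eq: "pi_f \<pi> f g i = m / f i"
    unfolding pi_f_def m_def by (simp add: mult.assoc)
  show "h_transform P f t g i - pi_f \<pi> f g i = P_apply t (\<lambda>j. f j * g j - m) i / f i"
    unfolding pi_f_eq P_apply_minus_const[OF assms(1,2)]
    by (simp add: h_transform_def P_apply_def diff_divide_distrib)
  show "g i - pi_f \<pi> f g i = (f i * g i - m) / f i" if "f i \<noteq> 0"
    unfolding pi_f_eq using that by (simp add: field_simps)
qed

text \<open>The weight \<open>f \<ge> 1\<close> is used only to pass from the \<open>f\<close>-norm to pointwise bounds.\<close>
lemma exp_f_ergodic_rate_imp_L2_exp_conv_rate:
  assumes f_ge_1: "\<And>i. f i \<ge> 1" and ergodic: "exp_f_ergodic_rate P \<pi> f \<epsilon>"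
  shows "L2_exp_conv_rate P \<pi> f \<epsilon>"
proof -
  obtain C :: "'a \<Rightarrow> real" where "\<epsilon> > 0" and C: "\<And>i t. t \<ge> 0 \<Longrightarrow>
      (\<lambda>j. f j * \<bar>P t i j - \<pi> j\<bar>) summable_on UNIV \<and>
      (\<Sum>\<^sub>\<infinity>j. f j * \<bar>P t i j - \<pi> j\<bar>) \<le> C i * exp (- \<epsilon> * t)"
    using ergodic unfolding exp_f_ergodic_rate_def by blast
  have decay: "\<bar>P s i j - \<pi> j\<bar> \<le> C i * exp (- \<epsilon> * s)" if s: "s \<ge> 0" for i j s
  proof -
    have "\<bar>P s i j - \<pi> j\<bar> \<le> (\<Sum>k\<in>{j}. f k * \<bar>P s i k - \<pi> k\<bar>)"
      using f_ge_1[of j] by (simp add: mult_le_cancel_right1)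
    also have "\<dots> \<le> (\<Sum>\<^sub>\<infinity>k. f k * \<bar>P s i k - \<pi> k\<bar>)"
      using C[OF s, of i] f_ge_1 by (intro finite_sum_le_infsum) (auto intro: mult_nonneg_nonneg order_trans[OF zero_le_one f_ge_1])
    finally show ?thesis using C[OF s, of i] by simp
  qed
  have f_nonzero: "f i \<noteq> 0" for i using f_ge_1[of i] by simp
  show ?thesis unfolding L2_exp_conv_rate_def
  proof (intro conjI \<open>\<epsilon> > 0\<close> allI impI)
    fix t :: real and g assume t: "t \<ge> 0" and "in_L2 (nu \<pi> f) g"
    define m where "m = (\<Sum>\<^sub>\<infinity>j. \<pi> j * (f j * g j))"
    define w where "w = (\<lambda>j. f j * g j - m)"
    have u2: "(\<lambda>j. \<pi> j * (f j * g j)\<^sup>2) summable_on UNIV"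
      using \<open>in_L2 (nu \<pi> f) g\<close> by (simp add: in_L2_def nu_def power_mult_distrib mult_ac)
    have w2: "(\<lambda>j. \<pi> j * (w j)\<^sup>2) summable_on UNIV"
      and mean: "((\<lambda>j. \<pi> j * w j) has_sum 0) UNIV"
      using centered_L2[OF u2] unfolding w_def m_def by simp_all
    have nu_Pw: "nu \<pi> f i * (h_transform P f t g i - pi_f \<pi> f g i)\<^sup>2 = \<pi> i * (P_apply t w i)\<^sup>2"
      and nu_w: "nu \<pi> f i * (g i - pi_f \<pi> f g i)\<^sup>2 = \<pi> i * (w i)\<^sup>2" for i
      using h_transform_minus_pi_f[OF t u2, folded m_def w_def] nu_mult_sq_div[of f, OF f_nonzero]
      by (simp_all add: w_def f_nonzero)
    note contraction = P_apply_L2_contraction[OF w2 mean decay t]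
    show "in_L2 (nu \<pi> f) (\<lambda>i. h_transform P f t g i - pi_f \<pi> f g i)"
      unfolding in_L2_def nu_Pw by (rule contraction(1))
    have "L2_norm (nu \<pi> f) (\<lambda>i. h_transform P f t g i - pi_f \<pi> f g i)
          = sqrt (\<Sum>\<^sub>\<infinity>i. \<pi> i * (P_apply t w i)\<^sup>2)"
      unfolding L2_norm_def nu_Pw ..
    also have "\<dots> \<le> sqrt ((exp (- \<epsilon> * t))\<^sup>2 * (\<Sum>\<^sub>\<infinity>j. \<pi> j * (w j)\<^sup>2))"
      using contraction(2) by (simp add: power2_eq_square mult_ac flip: exp_add)
    also have "\<dots> = L2_norm (nu \<pi> f) (\<lambda>i. g i - pi_f \<pi> f g i) * exp (- \<epsilon> * t)"
      unfolding L2_norm_def nu_w by (simp add: real_sqrt_mult)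
    finally show "L2_norm (nu \<pi> f) (\<lambda>i. h_transform P f t g i - pi_f \<pi> f g i)
                  \<le> L2_norm (nu \<pi> f) (\<lambda>i. g i - pi_f \<pi> f g i) * exp (- \<epsilon> * t)" .
  qed
qed

lemma h_transform_point_mass:
  assumes "t \<ge> 0" "f i \<noteq> 0"
  defines "\<delta> \<equiv> \<lambda>k. if k = i then 1 / (\<pi> i * f i) else 0"
  shows "h_transform P f t \<delta> j - pi_f \<pi> f \<delta> j = (P t i j / \<pi> j - 1) / f j"
proof -
  have single: "(\<Sum>\<^sub>\<infinity>k. if k = i then a else 0) = (a :: real)" for a
    by (rule infsumI, rule has_sum_finite_neutralI[of "{i}"]) auto
  have "(\<lambda>k. P t j k * (f k * \<delta> k)) = (\<lambda>k. if k = i then P t j i / \<pi> i else 0)"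
    and "(\<lambda>k. \<pi> k * f k * \<delta> k) = (\<lambda>k. if k = i then 1 else 0)"
    using assms(2) pi_pos[of i] by (auto simp: \<delta>_def)
  then have "h_transform P f t \<delta> j - pi_f \<pi> f \<delta> j = (P t j i / \<pi> i - 1) / f j"
    unfolding h_transform_def pi_f_def by (simp add: single diff_divide_distrib)
  then show ?thesis using P_div_pi_sym[OF assms(1), of i j] by simp
qed

lemma L2_exp_conv_rate_imp_exp_f_ergodic_rate:
  assumes f_pos: "\<And>i. f i > 0" and f2: "(\<lambda>i. \<pi> i * (f i)\<^sup>2) summable_on UNIV"
    and L2: "L2_exp_conv_rate P \<pi> f \<sigma>"
  shows "exp_f_ergodic_rate P \<pi> f \<sigma>"
proof -
  define \<delta> where "\<delta> i k = (if k = i then 1 / (\<pi> i * f i) else 0)" for i k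
  define C where "C i = sqrt (\<Sum>\<^sub>\<infinity>j. \<pi> j * (f j)\<^sup>2) * L2_norm (nu \<pi> f) (\<lambda>j. \<delta> i j - pi_f \<pi> f (\<delta> i) j)"
    for i
  show ?thesis unfolding exp_f_ergodic_rate_def
  proof (intro conjI exI[of _ C] allI impI)
    show "\<sigma> > 0" using L2 unfolding L2_exp_conv_rate_def by simp
    fix i and t :: real assume t: "t \<ge> 0"
    define q where "q j = P t i j / \<pi> j - 1" for j
    have "in_L2 (nu \<pi> f) (\<delta> i)"
      unfolding in_L2_def
      by (rule finite_nonzero_values_imp_summable_on, rule finite_subset[of _ "{i}"])
         (auto simp: \<delta>_def)
    with L2 t have L2_in: "in_L2 (nu \<pi> f) (\<lambda>j. h_transform P f t (\<delta> i) j - pi_f \<pi> f (\<delta> i) j)"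
      and L2_bound: "L2_norm (nu \<pi> f) (\<lambda>j. h_transform P f t (\<delta> i) j - pi_f \<pi> f (\<delta> i) j)
          \<le> L2_norm (nu \<pi> f) (\<lambda>j. \<delta> i j - pi_f \<pi> f (\<delta> i) j) * exp (- \<sigma> * t)"
      unfolding L2_exp_conv_rate_def by auto
    have nu_q: "nu \<pi> f j * (h_transform P f t (\<delta> i) j - pi_f \<pi> f (\<delta> i) j)\<^sup>2 = \<pi> j * (q j)\<^sup>2" for j
      using h_transform_point_mass[OF t, of f i j] nu_mult_sq_div[of f j] f_pos
      unfolding \<delta>_def q_def by (simp add: less_imp_neq[OF f_pos, symmetric])
    have q2: "(\<lambda>j. \<pi> j * (q j)\<^sup>2) summable_on UNIV"
      using L2_in unfolding in_L2_def nu_q .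
    have f_norm: "f j * \<bar>P t i j - \<pi> j\<bar> = \<pi> j * \<bar>f j * q j\<bar>" for j
    proof -
      have "P t i j - \<pi> j = \<pi> j * q j" using pi_pos[of j] by (simp add: q_def field_simps)
      then show ?thesis using pi_pos[of j] f_pos[of j] by (simp add: abs_mult)
    qed
    note CS = infsum_weighted_abs_le_sqrt_mult[OF pi_nonneg f2 q2]
    show "(\<lambda>j. f j * \<bar>P t i j - \<pi> j\<bar>) summable_on UNIV"
      unfolding f_norm by (rule CS(1))
    have "(\<Sum>\<^sub>\<infinity>j. f j * \<bar>P t i j - \<pi> j\<bar>)
          \<le> sqrt (\<Sum>\<^sub>\<infinity>j. \<pi> j * (f j)\<^sup>2) * sqrt (\<Sum>\<^sub>\<infinity>j. \<pi> j * (q j)\<^sup>2)"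
      unfolding f_norm by (rule CS(2))
    also have "\<dots> \<le> C i * exp (- \<sigma> * t)"
      using L2_bound unfolding C_def mult.assoc L2_norm_def nu_q
      by (intro mult_left_mono) (simp_all add: infsum_nonneg pi_nonneg)
    finally show "(\<Sum>\<^sub>\<infinity>j. f j * \<bar>P t i j - \<pi> j\<bar>) \<le> C i * exp (- \<sigma> * t)" .
  qed
qed

end

lemma stationary_distribution_pos:
  assumes "markov_semigroup P" "irreducible_chain P" "stationary_distribution P \<pi>"
  shows "\<pi> j > 0"
proof -
  have pi_nonneg: "\<And>i. \<pi> i \<ge> 0" and "(\<pi> has_sum 1) UNIV"
    and stat: "\<And>t j. t \<ge> 0 \<Longrightarrow> ((\<lambda>i. \<pi> i * P t i j) has_sum \<pi> j) UNIV"
    using assms(3) unfolding stationary_distribution_def by auto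
  obtain k where k: "\<pi> k > 0"
  proof (rule ccontr)
    assume "\<not> thesis"
    then have "\<pi> = (\<lambda>_. 0)" using that pi_nonneg by (force simp: order_le_less)
    with \<open>(\<pi> has_sum 1) UNIV\<close> show False using has_sum_unique[OF _ has_sum_0] by force
  qed
  obtain t where t: "t > 0" "P t k j > 0"
    using assms(2) unfolding irreducible_chain_def by blast
  have P_nonneg: "P t i j \<ge> 0" for i
    using assms(1) t unfolding markov_semigroup_def by simp
  have "\<pi> k * P t k j \<le> \<pi> j"
    using finite_sum_le_has_sum[OF stat, of t "{k}" j] t
    by (simp add: mult_nonneg_nonneg pi_nonneg P_nonneg)
  moreover have "\<pi> k * P t k j > 0" using k t by simp
  ultimately show ?thesis by simp
qed

lemma reversible_chainI:
  assumes "positive_recurrent P" "stationary_distribution P \<pi>" "reversible P \<pi>"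
  shows "reversible_chain P \<pi>"
proof
  have "markov_semigroup P" "irreducible_chain P"
    using assms(1) unfolding positive_recurrent_def by auto
  then show "\<And>i. 0 < \<pi> i" using stationary_distribution_pos[OF _ _ assms(2)] by blast
  from \<open>markov_semigroup P\<close> show
    "\<And>t i j. 0 \<le> t \<Longrightarrow> 0 \<le> P t i j"
    "\<And>t i. 0 \<le> t \<Longrightarrow> ((\<lambda>j. P t i j) has_sum 1) UNIV"
    "\<And>i j. P 0 i j = (if i = j then 1 else 0)"
    "\<And>s t i k. 0 \<le> s \<Longrightarrow> 0 \<le> t \<Longrightarrow> ((\<lambda>j. P s i j * P t j k) has_sum P (s + t) i k) UNIV"
    unfolding markov_semigroup_def by auto
  show "(\<pi> has_sum 1) UNIV" using assms(2) unfolding stationary_distribution_def by auto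
  show "\<And>t i j. 0 \<le> t \<Longrightarrow> \<pi> i * P t i j = \<pi> j * P t j i"
    using assms(3) unfolding reversible_def by auto
qed

theorem theorem3p3:
  fixes P :: "real \<Rightarrow> 'a::countable \<Rightarrow> 'a \<Rightarrow> real"
    and \<pi> f :: "'a \<Rightarrow> real"
  assumes "positive_recurrent P"
    and "stationary_distribution P \<pi>"
    and "reversible P \<pi>"
    and "\<forall>i. f i \<ge> 1"
    and "(\<lambda>i. \<pi> i * (f i)^2) summable_on UNIV"
  shows "(exp_f_ergodic P \<pi> f \<longleftrightarrow> L2_exp_conv P \<pi> f) \<and> eps_max P \<pi> f = sigma_max P \<pi> f"
proof -
  interpret reversible_chain P \<pi>
    using assms(1-3) by (rule reversible_chainI)
  have f_ge_1: "\<And>i. f i \<ge> 1" and f_pos: "\<And>i. f i > 0"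
    using assms(4) by (auto intro: less_le_trans[OF zero_less_one])
  have same_rates: "exp_f_ergodic_rate P \<pi> f r \<longleftrightarrow> L2_exp_conv_rate P \<pi> f r" for r
    using exp_f_ergodic_rate_imp_L2_exp_conv_rate[of f, OF f_ge_1]
      L2_exp_conv_rate_imp_exp_f_ergodic_rate[OF f_pos assms(5)] by blast
  show ?thesis
    unfolding exp_f_ergodic_def L2_exp_conv_def eps_max_def sigma_max_def same_rates by simp
qed

end
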